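(* Let $(Q,\mathcal M)$ be a modulated quiver with $\mathcal M$ v-uniform, $I$ an admissible ideal of $T(Q,\mathcal M)$, $\Psi$ a complexification isomorphism and $J=\Psi(\mathbf e(I\otimes_{\mathbb R}\mathbb C)\mathbf e)$. Then a vertex $v$ of $Q$ is gentle in $(Q,R_I)$ if and only if every fiber of $v$ in $\Gamma$ is gentle in $(\Gamma,J)$.
   Context: Quivers $Q=(Q_0,Q_1,s,t)$ are finite; an arrow $\alpha$ goes from $s(\alpha)$ to $t(\alpha)$. Paths are written from right to left: a path of length $n\ge1$ is $p=\alpha_n\cdots\alpha_1$ with $t(\alpha_k)=s(\alpha_{k+1})$; each vertex $i$ has a trivial path $e_i$. For a division ring $D$, $DQ$ denotes the path algebra of $Q$ over $D$ (free left $D$-module on the paths, scalars commuting with paths, multiplication by concatenation). Let $\mathbb H=\{\begin{bmatrix}a&b\\-\bar b&\bar a\end{bmatrix}:a,b\in\mathbb C\}\subset M_2(\mathbb C)$ be the real quaternions. A modulation $\mathcal M$ of $Q$ assigns to each vertex $i$ a division ring $\mathcal M(i)\in\{\mathbb R,\mathbb C,\mathbb H\}$ and to each arrow $\alpha$ a simple $\mathcal M(t(\alpha))$-$\mathcal M(s(\alpha))$-bimodule $\mathcal M(\alpha)$ on which $\mathbb R$ acts centrally; $(Q,\mathcal M)$ is a modulated quiver. Up to isomorphism there is exactly one such simple bimodule for each pair of these division rings other than $(\mathbb C,\mathbb C)$, and for $(\mathbb C,\mathbb C)$ there are exactly two: $\mathbb C$ with action $a\cdot z\cdot b=azb$, and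 $\overline{\mathbb C}$, which is $\mathbb C$ as a set with action $a\cdot z\cdot b=az\bar b$. For a path $p=\alpha_n\cdots\alpha_1$ put $\mathcal M(p)=\mathcal M(\alpha_n)\otimes_{\mathcal M(s(\alpha_n))}\cdots\otimes_{\mathcal M(s(\alpha_2))}\mathcal M(\alpha_1)$, and $\mathcal M(e_i)=\mathcal M(i)$. The tensor algebra is $T(Q,\mathcal M)=\prod_{i\in Q_0}\mathcal M(i)\oplus\bigoplus_{p}\mathcal M(p)$ (sum over paths of length $\ge1$). An ideal $I$ of $T(Q,\mathcal M)$ is admissible if $A^m\subseteq I\subseteq A^2$ for some $m\ge2$, where $A$ is the ideal generated by $\bigoplus_{\alpha\in Q_1}\mathcal M(\alpha)$. $\mathcal M$ is v-uniform with $D\in\{\mathbb R,\mathbb C,\mathbb H\}$ if $\mathcal M(i)=D$ for all $i\in Q_0$. Then every $\mathcal M(\alpha)$ has underlying set $D$, and for a path $p$ we write $1_{\mathcal M(p)}=1\otimes\cdots\otimes1\in\mathcal M(p)$ ($1_{\mathcal M(e_i)}$ being the identity of $\mathcal M(i)$). For an ideal $I$ of $T(Q,\mathcal M)$ put $R_I=\{\sum_k d_kp_k\in DQ:\ \sum_k d_k1_{\mathcal M(p_k)}\in I\}$, an ideal of $DQ$. The quiver $\Gamma$ of $(Q,\mathcal M)$: each $i\in Q_0$ with $\mathcal M(i)\in\{\mathbb R,\mathbb H\}$ gives one vertex $i$ of $\Gamma$; each $i$ with $\mathcal M(i)=\mathbb C$ gives two vertices $i,\bar i$. Each arrow $\alpha:i\to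 j$ of $Q$ gives arrows of $\Gamma$ as follows: if $\mathcal M(i)=\mathcal M(j)\in\{\mathbb R,\mathbb H\}$, one arrow $\alpha:i\to j$; if $\mathcal M(i)=\mathbb C$ and $\mathcal M(j)\in\{\mathbb R,\mathbb H\}$, arrows $\alpha:i\to j$, $\bar\alpha:\bar i\to j$; if $\mathcal M(i)\in\{\mathbb R,\mathbb H\}$ and $\mathcal M(j)=\mathbb C$, arrows $\alpha:i\to j$, $\bar\alpha:i\to\bar j$; if $\{\mathcal M(i),\mathcal M(j)\}=\{\mathbb R,\mathbb H\}$, two arrows $\alpha,\bar\alpha:i\to j$; if $\mathcal M(i)=\mathcal M(j)=\mathbb C$ and $\mathcal M(\alpha)=\mathbb C$, arrows $\alpha:i\to j$, $\bar\alpha:\bar i\to\bar j$; if $\mathcal M(i)=\mathcal M(j)=\mathbb C$ and $\mathcal M(\alpha)=\overline{\mathbb C}$, arrows $\alpha:\bar i\to j$, $\bar\alpha:i\to\bar j$. The map $\pi:\Gamma\to Q$ sends $i,\bar i\mapsto i$ and $\alpha,\bar\alpha\mapsto\alpha$. A vertex or arrow $x$ of $\Gamma$ is a fiber of $\pi(x)$; a path $\beta_n\cdots\beta_1$ of $\Gamma$ is a fiber of the path $\pi(\beta_n)\cdots\pi(\beta_1)$ of $Q$, and the fibers of a trivial path $e_i$ are the trivial paths $e_{i'}$ with $i'$ a fiber of $i$. Identify $\mathbb R\otimes_{\mathbb R}\mathbb C=\mathbb C$, $\mathbb H\otimes_{\mathbb R}\mathbb C\cong M_2(\mathbb C)$ via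 $h\otimes c\mapsto ch$, and $\mathbb C\otimes_{\mathbb R}\mathbb C\cong\mathbb C\times\mathbb C$ via $a\otimes b\mapsto(ab,\bar ab)$. Let $\mathbf e=(\epsilon_i)_{i\in Q_0}\in\prod_i\mathcal M(i)\otimes_{\mathbb R}\mathbb C\subseteq T(Q,\mathcal M)\otimes_{\mathbb R}\mathbb C$, where $\epsilon_i=1$ if $\mathcal M(i)\in\{\mathbb R,\mathbb C\}$ and $\epsilon_i$ corresponds to the matrix unit $\begin{bmatrix}1&0\\0&0\end{bmatrix}$ if $\mathcal M(i)=\mathbb H$. A complexification isomorphism for $(Q,\mathcal M)$ is a $\mathbb C$-algebra isomorphism $\Psi:\mathbf e(T(Q,\mathcal M)\otimes_{\mathbb R}\mathbb C)\mathbf e\to\mathbb C\Gamma$ such that for every path $p$ of $Q$ (trivial or not), $\Psi(\mathbf e(\mathcal M(p)\otimes_{\mathbb R}\mathbb C)\mathbf e)=\bigoplus_q\mathbb Cq$, the sum over all fibers $q$ of $p$ in $\Gamma$; such isomorphisms exist. Gentle vertices. Let $k$ be a division ring, $Q$ a quiver and $R$ an ideal of $kQ$. A vertex $v$ is gentle in $(Q,R)$ if: (1) at most two arrows start at $v$ and at most two arrows end at $v$; (2) for all arrows $\alpha,\beta,\gamma$ with $\beta\ne\gamma$ and $t(\beta)=t(\gamma)=s(\alpha)=v$, exactly one of $\alpha\beta,\alpha\gamma$ belongs to $R$; (3) for all arrows $\alpha,\gamma,\beta$ with $\alpha\ne\gamma$ and $s(\alpha)=s(\gamma)=t(\beta)=v$,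 exactly one of $\alpha\beta,\gamma\beta$ belongs to $R$. *)

theory Defs
  imports Complex_Main "HOL-Library.Product_Plus"
begin

record ('v, 'a) quiver =
  verts :: "'v set"
  arrs  :: "'a set"
  src   :: "'a \<Rightarrow> 'v"
  tgt   :: "'a \<Rightarrow> 'v"

definition finite_quiver :: "('v, 'a) quiver \<Rightarrow> bool" where
  "finite_quiver Q \<longleftrightarrow> finite (verts Q) \<and> finite (arrs Q) \<and>
     (\<forall>a\<in>arrs Q. src Q a \<in> verts Q \<and> tgt Q a \<in> verts Q)"

text \<open>A path is a pair (v, [a1,...,an]): start vertex v and the arrows in the order
  they are traversed, so it denotes the path an...a1 (written right to left);
  (v, []) is the trivial path e_v.\<close>
type_synonym ('v, 'a) path = "'v \<times> 'a list"

definition is_path :: "('v, 'a) quiver \<Rightarrow> ('v, 'a) path \<Rightarrow> bool" where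
  "is_path Q p \<longleftrightarrow> fst p \<in> verts Q \<and> (\<forall>a\<in>set (snd p). a \<in> arrs Q) \<and>
     (snd p \<noteq> [] \<longrightarrow> src Q (hd (snd p)) = fst p) \<and>
     (\<forall>k. Suc k < length (snd p) \<longrightarrow> tgt Q (snd p ! k) = src Q (snd p ! Suc k))"

definition path_end :: "('v, 'a) quiver \<Rightarrow> ('v, 'a) path \<Rightarrow> 'v" where
  "path_end Q p = (if snd p = [] then fst p else tgt Q (last (snd p)))"

text \<open>The path \<alpha>\<beta> (first \<beta>, then \<alpha>).\<close>
definition comp2 :: "('v, 'a) quiver \<Rightarrow> 'a \<Rightarrow> 'a \<Rightarrow> ('v, 'a) path" where
  "comp2 Q \<alpha> \<beta> = (src Q \<beta>, [\<beta>, \<alpha>])"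

text \<open>Decomposition of a path r into r = q p with p of length k.\<close>
definition dec_p :: "('v, 'a) path \<Rightarrow> nat \<Rightarrow> ('v, 'a) path" where
  "dec_p r k = (fst r, take k (snd r))"
definition dec_q :: "('v, 'a) quiver \<Rightarrow> ('v, 'a) path \<Rightarrow> nat \<Rightarrow> ('v, 'a) path" where
  "dec_q Q r k = (path_end Q (dec_p r k), drop k (snd r))"

definition pa_carrier :: "('v, 'a) quiver \<Rightarrow> 'k::zero set \<Rightarrow> (('v, 'a) path \<Rightarrow> 'k) set" where
  "pa_carrier Q K = {f. finite {p. f p \<noteq> 0} \<and> (\<forall>p. f p \<noteq> 0 \<longrightarrow> is_path Q p) \<and> (\<forall>p. f p \<in> K)}"

definition pa_mul :: "('v, 'a) quiver \<Rightarrow> ('k \<Rightarrow> 'k \<Rightarrow> 'k) \<Rightarrow> (('v, 'a) path \<Rightarrow> 'k \<Rightarrow> 'k)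
    \<Rightarrow> (('v, 'a) path \<Rightarrow> 'k::comm_monoid_add) \<Rightarrow> (('v, 'a) path \<Rightarrow> 'k) \<Rightarrow> ('v, 'a) path \<Rightarrow> 'k" where
  "pa_mul Q mult \<sigma> f g r =
     (\<Sum>k\<le>length (snd r). mult (f (dec_q Q r k)) (\<sigma> (dec_q Q r k) (g (dec_p r k))))"

definition path_elem :: "'k::zero \<Rightarrow> ('v, 'a) path \<Rightarrow> ('v, 'a) path \<Rightarrow> 'k" where
  "path_elem one p = (\<lambda>q. if q = p then one else 0)"

definition gentle :: "('v, 'a) quiver \<Rightarrow> 'k::zero \<Rightarrow> (('v, 'a) path \<Rightarrow> 'k) set \<Rightarrow> 'v \<Rightarrow> bool" where
  "gentle Q one R v \<longleftrightarrow>
     card {a\<in>arrs Q. src Q a = v} \<le> 2 \<and> card {a\<in>arrs Q. tgt Q a = v} \<le> 2 \<and>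
     (\<forall>\<alpha>\<in>arrs Q. \<forall>\<beta>\<in>arrs Q. \<forall>\<gamma>\<in>arrs Q.
        \<beta> \<noteq> \<gamma> \<and> tgt Q \<beta> = v \<and> tgt Q \<gamma> = v \<and> src Q \<alpha> = v \<longrightarrow>
        ((path_elem one (comp2 Q \<alpha> \<beta>) \<in> R) \<noteq> (path_elem one (comp2 Q \<alpha> \<gamma>) \<in> R))) \<and>
     (\<forall>\<alpha>\<in>arrs Q. \<forall>\<gamma>\<in>arrs Q. \<forall>\<beta>\<in>arrs Q.
        \<alpha> \<noteq> \<gamma> \<and> src Q \<alpha> = v \<and> src Q \<gamma> = v \<and> tgt Q \<beta> = v \<longrightarrow>
        ((path_elem one (comp2 Q \<alpha> \<beta>) \<in> R) \<noteq> (path_elem one (comp2 Q \<gamma> \<beta>) \<in> R)))"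

text \<open>A quaternion is encoded by (a,b) \<in> C\<times>C, standing for the matrix [[a,b],[-conj b, conj a]];
  addition is componentwise (Product_Plus), multiplication is matrix multiplication.\<close>
type_synonym quat = "complex \<times> complex"

definition qmul :: "quat \<Rightarrow> quat \<Rightarrow> quat" where
  "qmul x y = (fst x * fst y - snd x * cnj (snd y), fst x * snd y + snd x * cnj (fst y))"

definition qone :: quat where "qone = (1, 0)"

definition qscale :: "real \<Rightarrow> quat \<Rightarrow> quat" where
  "qscale r x = (of_real r * fst x, of_real r * snd x)"

text \<open>Complex conjugation on the copy of C = {(z,0)} inside H.\<close>
definition qcnj :: "quat \<Rightarrow> quat" where
  "qcnj x = (cnj (fst x), cnj (snd x))"

datatype divring = DR | DC | DH

definition Dset :: "divring \<Rightarrow> quat set" where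
  "Dset D = (case D of DR \<Rightarrow> {(of_real r, 0) | r. True} | DC \<Rightarrow> {(z, 0) | z. True} | DH \<Rightarrow> UNIV)"

text \<open>A v-uniform modulation with division ring D: M(i) = D for all i. For D \<in> {R,H} each
  M(\<alpha>) is D with the regular actions; for D = C, M(\<alpha>) is C if bar \<alpha> = False and
  conj-C if bar \<alpha> = True. Identifying M(p) with D via d \<mapsto> d\<cdot>1_{M(p)},
  T(Q,M) = finitely supported functions p \<mapsto> d_p (element \<Sum> d_p 1_{M(p)}), and
  (d 1_q)(d' 1_p) = d \<sigma>_q(d') 1_{qp}, where \<sigma>_q is complex conjugation iff D = C and q
  contains an odd number of conj-C arrows.\<close>

definition tsigma :: "divring \<Rightarrow> ('a \<Rightarrow> bool) \<Rightarrow> ('v, 'a) path \<Rightarrow> quat \<Rightarrow> quat" where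
  "tsigma D bar q x = (if D = DC \<and> odd (length (filter bar (snd q))) then qcnj x else x)"

definition T_carrier :: "('v, 'a) quiver \<Rightarrow> divring \<Rightarrow> (('v, 'a) path \<Rightarrow> quat) set" where
  "T_carrier Q D = pa_carrier Q (Dset D)"

definition T_mul :: "('v, 'a) quiver \<Rightarrow> divring \<Rightarrow> ('a \<Rightarrow> bool)
    \<Rightarrow> (('v, 'a) path \<Rightarrow> quat) \<Rightarrow> (('v, 'a) path \<Rightarrow> quat) \<Rightarrow> ('v, 'a) path \<Rightarrow> quat" where
  "T_mul Q D bar = pa_mul Q qmul (tsigma D bar)"

definition fadd :: "('p \<Rightarrow> 'k::plus) \<Rightarrow> ('p \<Rightarrow> 'k) \<Rightarrow> 'p \<Rightarrow> 'k" where
  "fadd f g = (\<lambda>p. f p + g p)"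
definition fsub :: "('p \<Rightarrow> 'k::minus) \<Rightarrow> ('p \<Rightarrow> 'k) \<Rightarrow> 'p \<Rightarrow> 'k" where
  "fsub f g = (\<lambda>p. f p - g p)"
definition fneg :: "('p \<Rightarrow> 'k::uminus) \<Rightarrow> 'p \<Rightarrow> 'k" where
  "fneg f = (\<lambda>p. - f p)"

definition T_ideal :: "('v, 'a) quiver \<Rightarrow> divring \<Rightarrow> ('a \<Rightarrow> bool) \<Rightarrow> (('v, 'a) path \<Rightarrow> quat) set \<Rightarrow> bool" where
  "T_ideal Q D bar I \<longleftrightarrow> I \<subseteq> T_carrier Q D \<and> (\<lambda>_. 0) \<in> I \<and>
     (\<forall>x\<in>I. \<forall>y\<in>I. fadd x y \<in> I) \<and> (\<forall>x\<in>I. fneg x \<in> I) \<and>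
     (\<forall>x\<in>I. \<forall>a\<in>T_carrier Q D. T_mul Q D bar a x \<in> I \<and> T_mul Q D bar x a \<in> I)"

definition T_ideal_gen :: "('v, 'a) quiver \<Rightarrow> divring \<Rightarrow> ('a \<Rightarrow> bool)
    \<Rightarrow> (('v, 'a) path \<Rightarrow> quat) set \<Rightarrow> (('v, 'a) path \<Rightarrow> quat) set" where
  "T_ideal_gen Q D bar X = \<Inter>{I. T_ideal Q D bar I \<and> X \<subseteq> I}"

definition T_arrow_part :: "('v, 'a) quiver \<Rightarrow> divring \<Rightarrow> (('v, 'a) path \<Rightarrow> quat) set" where
  "T_arrow_part Q D = {f \<in> T_carrier Q D. \<exists>\<alpha>\<in>arrs Q. \<forall>p. f p \<noteq> 0 \<longrightarrow> p = (src Q \<alpha>, [\<alpha>])}"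

definition T_A :: "('v, 'a) quiver \<Rightarrow> divring \<Rightarrow> ('a \<Rightarrow> bool) \<Rightarrow> (('v, 'a) path \<Rightarrow> quat) set" where
  "T_A Q D bar = T_ideal_gen Q D bar (T_arrow_part Q D)"

definition add_closure :: "(('p \<Rightarrow> 'k::monoid_add)) set \<Rightarrow> ('p \<Rightarrow> 'k) set" where
  "add_closure X = \<Inter>{Y. (\<lambda>_. 0) \<in> Y \<and> X \<subseteq> Y \<and> (\<forall>x\<in>Y. \<forall>y\<in>Y. fadd x y \<in> Y)}"

definition T_ideal_prod :: "('v, 'a) quiver \<Rightarrow> divring \<Rightarrow> ('a \<Rightarrow> bool)
    \<Rightarrow> (('v, 'a) path \<Rightarrow> quat) set \<Rightarrow> (('v, 'a) path \<Rightarrow> quat) set \<Rightarrow> (('v, 'a) path \<Rightarrow> quat) set" where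
  "T_ideal_prod Q D bar X Y = add_closure {T_mul Q D bar x y | x y. x \<in> X \<and> y \<in> Y}"

fun T_ideal_pow :: "('v, 'a) quiver \<Rightarrow> divring \<Rightarrow> ('a \<Rightarrow> bool)
    \<Rightarrow> (('v, 'a) path \<Rightarrow> quat) set \<Rightarrow> nat \<Rightarrow> (('v, 'a) path \<Rightarrow> quat) set" where
  "T_ideal_pow Q D bar X 0 = T_carrier Q D"
| "T_ideal_pow Q D bar X (Suc n) = T_ideal_prod Q D bar (T_ideal_pow Q D bar X n) X"

definition admissible :: "('v, 'a) quiver \<Rightarrow> divring \<Rightarrow> ('a \<Rightarrow> bool) \<Rightarrow> (('v, 'a) path \<Rightarrow> quat) set \<Rightarrow> bool" where
  "admissible Q D bar I \<longleftrightarrow> T_ideal Q D bar I \<and>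
     (\<exists>m\<ge>2. T_ideal_pow Q D bar (T_A Q D bar) m \<subseteq> I) \<and> I \<subseteq> T_ideal_pow Q D bar (T_A Q D bar) 2"

text \<open>R_I \<subseteq> DQ: \<Sum> d_k p_k \<in> R_I iff \<Sum> d_k 1_{M(p_k)} \<in> I. Since the element
  \<Sum> d_k 1_{M(p_k)} of T is represented by the same coefficient function, this is:\<close>
definition R_of :: "('v, 'a) quiver \<Rightarrow> divring \<Rightarrow> (('v, 'a) path \<Rightarrow> quat) set \<Rightarrow> (('v, 'a) path \<Rightarrow> quat) set" where
  "R_of Q D I = {f \<in> pa_carrier Q (Dset D). f \<in> I}"

text \<open>Vertex (i, False) is i, (i, True) is i-bar; arrow (\<alpha>, False) is \<alpha>, (\<alpha>, True) is \<alpha>-bar.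
  Mv gives M(i) for each vertex; bar \<alpha> says M(\<alpha>) = conj-C (only relevant for C-C arrows).\<close>
definition RH :: "divring \<Rightarrow> bool" where "RH d \<longleftrightarrow> d = DR \<or> d = DH"

definition Gamma :: "('v, 'a) quiver \<Rightarrow> ('v \<Rightarrow> divring) \<Rightarrow> ('a \<Rightarrow> bool) \<Rightarrow> ('v \<times> bool, 'a \<times> bool) quiver" where
  "Gamma Q Mv bar =
    \<lparr> verts = {(i, False) | i. i \<in> verts Q} \<union> {(i, True) | i. i \<in> verts Q \<and> Mv i = DC},
      arrs = {(\<alpha>, False) | \<alpha>. \<alpha> \<in> arrs Q} \<union>
             {(\<alpha>, True) | \<alpha>. \<alpha> \<in> arrs Q \<and> \<not> (Mv (src Q \<alpha>) = Mv (tgt Q \<alpha>) \<and> RH (Mv (src Q \<alpha>)))},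
      src = (\<lambda>(\<alpha>, b). let i = src Q \<alpha>; j = tgt Q \<alpha> in
              if Mv i = DC \<and> Mv j = DC then (i, if bar \<alpha> then \<not> b else b)
              else if Mv i = DC then (i, b) else (i, False)),
      tgt = (\<lambda>(\<alpha>, b). let i = src Q \<alpha>; j = tgt Q \<alpha> in
              if Mv j = DC then (j, b) else (j, False)) \<rparr>"

definition vertex_fibers :: "('v, 'a) quiver \<Rightarrow> ('v \<Rightarrow> divring) \<Rightarrow> ('a \<Rightarrow> bool) \<Rightarrow> 'v \<Rightarrow> ('v \<times> bool) set" where
  "vertex_fibers Q Mv bar v = {x \<in> verts (Gamma Q Mv bar). fst x = v}"

definition path_fibers :: "('v, 'a) quiver \<Rightarrow> ('v \<Rightarrow> divring) \<Rightarrow> ('a \<Rightarrow> bool) \<Rightarrow> ('v, 'a) path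
    \<Rightarrow> ('v \<times> bool, 'a \<times> bool) path set" where
  "path_fibers Q Mv bar p = {q. is_path (Gamma Q Mv bar) q \<and> fst (fst q) = fst p \<and> map fst (snd q) = snd p}"

definition CG_carrier :: "('v, 'a) quiver \<Rightarrow> ('v \<Rightarrow> divring) \<Rightarrow> ('a \<Rightarrow> bool)
    \<Rightarrow> (('v \<times> bool, 'a \<times> bool) path \<Rightarrow> complex) set" where
  "CG_carrier Q Mv bar = pa_carrier (Gamma Q Mv bar) UNIV"

definition CG_mul :: "('v, 'a) quiver \<Rightarrow> ('v \<Rightarrow> divring) \<Rightarrow> ('a \<Rightarrow> bool)
    \<Rightarrow> (('v \<times> bool, 'a \<times> bool) path \<Rightarrow> complex) \<Rightarrow> (('v \<times> bool, 'a \<times> bool) path \<Rightarrow> complex)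
    \<Rightarrow> ('v \<times> bool, 'a \<times> bool) path \<Rightarrow> complex" where
  "CG_mul Q Mv bar = pa_mul (Gamma Q Mv bar) (*) (\<lambda>_ x. x)"

text \<open>T \<otimes>_R C is modelled as pairs (x, y) of elements of T standing for x\<otimes>1 + y\<otimes>i.\<close>
type_synonym ('v, 'a) TC = "(('v, 'a) path \<Rightarrow> quat) \<times> (('v, 'a) path \<Rightarrow> quat)"

definition TC_carrier :: "('v, 'a) quiver \<Rightarrow> divring \<Rightarrow> ('v, 'a) TC set" where
  "TC_carrier Q D = T_carrier Q D \<times> T_carrier Q D"

definition TC_add :: "('v, 'a) TC \<Rightarrow> ('v, 'a) TC \<Rightarrow> ('v, 'a) TC" where
  "TC_add z w = (fadd (fst z) (fst w), fadd (snd z) (snd w))"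

definition TC_mul :: "('v, 'a) quiver \<Rightarrow> divring \<Rightarrow> ('a \<Rightarrow> bool) \<Rightarrow> ('v, 'a) TC \<Rightarrow> ('v, 'a) TC \<Rightarrow> ('v, 'a) TC" where
  "TC_mul Q D bar z w =
     (fsub (T_mul Q D bar (fst z) (fst w)) (T_mul Q D bar (snd z) (snd w)),
      fadd (T_mul Q D bar (fst z) (snd w)) (T_mul Q D bar (snd z) (fst w)))"

definition TC_scal :: "complex \<Rightarrow> ('v, 'a) TC \<Rightarrow> ('v, 'a) TC" where
  "TC_scal c z =
     ((\<lambda>p. qscale (Re c) (fst z p) - qscale (Im c) (snd z p)),
      (\<lambda>p. qscale (Re c) (snd z p) + qscale (Im c) (fst z p)))"

text \<open>The idempotent e = (eps_i)_i. For D = H, eps_i is the matrix unit E11 under h\<otimes>c \<mapsto> ch;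
  E11 = (1/2)\<otimes>1 + (-(1/2) q)\<otimes>i with q = [[i,0],[0,-i]], i.e. q = (i, 0).\<close>
definition ebold :: "('v, 'a) quiver \<Rightarrow> divring \<Rightarrow> ('v, 'a) TC" where
  "ebold Q D =
     ((\<lambda>p. if snd p = [] \<and> fst p \<in> verts Q then (if D = DH then (1/2, 0) else (1, 0)) else 0),
      (\<lambda>p. if snd p = [] \<and> fst p \<in> verts Q \<and> D = DH then (- (\<i> / 2), 0) else 0))"

definition corner :: "('v, 'a) quiver \<Rightarrow> divring \<Rightarrow> ('a \<Rightarrow> bool) \<Rightarrow> ('v, 'a) TC set \<Rightarrow> ('v, 'a) TC set" where
  "corner Q D bar X = {TC_mul Q D bar (ebold Q D) (TC_mul Q D bar z (ebold Q D)) | z. z \<in> X}"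

definition MpC :: "('v, 'a) quiver \<Rightarrow> divring \<Rightarrow> ('v, 'a) path \<Rightarrow> ('v, 'a) TC set" where
  "MpC Q D p = {z \<in> TC_carrier Q D. (\<forall>q. fst z q \<noteq> 0 \<longrightarrow> q = p) \<and> (\<forall>q. snd z q \<noteq> 0 \<longrightarrow> q = p)}"

definition complexification_iso :: "('v, 'a) quiver \<Rightarrow> divring \<Rightarrow> ('a \<Rightarrow> bool)
    \<Rightarrow> (('v, 'a) TC \<Rightarrow> ('v \<times> bool, 'a \<times> bool) path \<Rightarrow> complex) \<Rightarrow> bool" where
  "complexification_iso Q D bar \<Psi> \<longleftrightarrow>
     bij_betw \<Psi> (corner Q D bar (TC_carrier Q D)) (CG_carrier Q (\<lambda>_. D) bar) \<and>
     (\<forall>z\<in>corner Q D bar (TC_carrier Q D). \<forall>w\<in>corner Q D bar (TC_carrier Q D).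
        \<Psi> (TC_add z w) = fadd (\<Psi> z) (\<Psi> w) \<and>
        \<Psi> (TC_mul Q D bar z w) = CG_mul Q (\<lambda>_. D) bar (\<Psi> z) (\<Psi> w)) \<and>
     (\<forall>c. \<forall>z\<in>corner Q D bar (TC_carrier Q D). \<Psi> (TC_scal c z) = (\<lambda>q. c * \<Psi> z q)) \<and>
     (\<forall>p. is_path Q p \<longrightarrow>
        \<Psi> ` corner Q D bar (MpC Q D p) =
          {g \<in> CG_carrier Q (\<lambda>_. D) bar. \<forall>q. g q \<noteq> 0 \<longrightarrow> q \<in> path_fibers Q (\<lambda>_. D) bar p})"

definition IC :: "(('v, 'a) path \<Rightarrow> quat) set \<Rightarrow> ('v, 'a) TC set" where
  "IC I = I \<times> I"

end

(* R_I is I itself, since an element of DQ and the element of T it names are the same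
   coefficient function. For a path p of Q and a fibre q of p in Gamma, e_q lies in J iff
   p lies in I: by the defining property of Psi, e_q is the image of an element of the
   corner of M(p) (x) C, so by injectivity e_q lies in J iff that corner meets I (x) C in
   a nonzero element; such an element is supported on p alone, and nonzero scalars of D are
   invertible. Finally, the arrows of Gamma starting (ending) at a fibre w of v correspond
   bijectively to the arrows of Q starting (ending) at v, compatibly with composition, so
   the gentleness conditions at w and at v coincide. *)
theory Submission
  imports Defs
begin

lemma qmul_zero_left [simp]: "qmul 0 x = 0"
  by (simp add: qmul_def zero_prod_def)

lemma qmul_zero_right [simp]: "qmul x 0 = 0"
  by (simp add: qmul_def zero_prod_def)

lemma qmul_qone_right [simp]: "qmul x qone = x"
  by (simp add: qmul_def qone_def)

lemma tsigma_zero [simp]: "tsigma D bar q 0 = 0"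
  by (simp add: tsigma_def qcnj_def zero_prod_def)

lemma tsigma_trivial_path: "snd q = [] \<Longrightarrow> tsigma D bar q x = x"
  by (simp add: tsigma_def)

lemma zero_in_Dset [simp]: "0 \<in> Dset D"
  by (cases D) (auto simp: Dset_def zero_prod_def intro: exI[of _ 0])

lemma qone_in_Dset [simp]: "qone \<in> Dset D"
  by (cases D) (auto simp: Dset_def qone_def intro: exI[of _ 1])

lemma qone_neq_zero [simp]: "qone \<noteq> 0"
  by (simp add: qone_def zero_prod_def)

text \<open>The left inverse of (a, b) is its conjugate (cnj a, -b) divided by the norm
  |a|^2 + |b|^2; it stays in R or C when (a, b) does.\<close>
lemma Dset_left_inverse:
  assumes "d \<in> Dset D" "d \<noteq> 0"
  obtains d' where "d' \<in> Dset D" "qmul d' d = qone"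
proof -
  obtain a b where ab: "d = (a, b)" by (cases d)
  define n where "n = (cmod a)\<^sup>2 + (cmod b)\<^sup>2"
  have "n \<noteq> 0" using assms(2) ab by (auto simp: n_def zero_prod_def sum_power2_eq_zero_iff)
  hence n0: "complex_of_real n \<noteq> 0" by simp
  define d' where "d' = (cnj a / complex_of_real n, - b / complex_of_real n)"
  have "cnj a * a - - b * cnj b = complex_of_real n"
    by (simp add: n_def complex_norm_square algebra_simps flip: of_real_power)
  moreover have "cnj a * b + - b * cnj a = 0" by (simp add: algebra_simps)
  ultimately have "qmul d' d = qone"
    using n0 unfolding qmul_def d'_def ab qone_def by (simp add: field_simps)
  moreover have "d' \<in> Dset D"
  proof (cases D)
    case DR
    then obtain r where "a = of_real r" "b = 0" using assms(1) ab by (auto simp: Dset_def)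
    then show ?thesis
      using DR by (auto simp: Dset_def d'_def n_def intro!: exI[of _ "r / (cmod (of_real r))\<^sup>2"])
  next
    case DC
    then have "b = 0" using assms(1) ab by (auto simp: Dset_def)
    then show ?thesis using DC by (auto simp: Dset_def d'_def)
  qed (simp add: Dset_def)
  ultimately show ?thesis using that by blast
qed

lemma path_end_trivial [simp]: "path_end Q (v, []) = v"
  by (simp add: path_end_def)

lemma dec_full [simp]: "dec_p r (length (snd r)) = r" "dec_q Q r (length (snd r)) = (path_end Q r, [])"
  by (simp_all add: dec_p_def dec_q_def)

lemma T_mul_trivial_path_left:
  fixes Q :: "('v, 'a) quiver"
  shows "T_mul Q D bar (path_elem d (path_end Q p, [])) (path_elem c p) = path_elem (qmul d c) p"
proof
  fix r :: "('v, 'a) path"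
  have "T_mul Q D bar (path_elem d (path_end Q p, [])) (path_elem c p) r =
      (\<Sum>k\<le>length (snd r). if k = length (snd r)
         then qmul (path_elem d (path_end Q p, []) (path_end Q r, [])) (path_elem c p r) else 0)"
    unfolding T_mul_def pa_mul_def
    by (rule sum.cong) (auto simp: path_elem_def dec_q_def tsigma_trivial_path)
  then show "T_mul Q D bar (path_elem d (path_end Q p, [])) (path_elem c p) r = path_elem (qmul d c) p r"
    by (simp add: path_elem_def)
qed

lemma T_mul_left_trivial_vanishes:
  assumes "\<forall>s. u s \<noteq> 0 \<longrightarrow> snd s = []" "x r = 0"
  shows "T_mul Q D bar u x r = 0"
  unfolding T_mul_def pa_mul_def
proof (rule sum.neutral, intro ballI)
  fix k assume k: "k \<in> {..length (snd r)}"
  show "qmul (u (dec_q Q r k)) (tsigma D bar (dec_q Q r k) (x (dec_p r k))) = 0"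
  proof (cases "u (dec_q Q r k) = 0")
    case False
    then have "drop k (snd r) = []" using assms(1) unfolding dec_q_def by fastforce
    with k have "k = length (snd r)" by auto
    then show ?thesis using assms(2) by simp
  qed simp
qed

lemma T_mul_right_trivial_vanishes:
  assumes "\<forall>s. u s \<noteq> 0 \<longrightarrow> snd s = []" "x r = 0"
  shows "T_mul Q D bar x u r = 0"
  unfolding T_mul_def pa_mul_def
proof (rule sum.neutral, intro ballI)
  fix k assume k: "k \<in> {..length (snd r)}"
  show "qmul (x (dec_q Q r k)) (tsigma D bar (dec_q Q r k) (u (dec_p r k))) = 0"
  proof (cases "u (dec_p r k) = 0")
    case False
    then have "take k (snd r) = []" using assms(1) unfolding dec_p_def by fastforce
    then have "k = 0 \<or> snd r = []" by (cases "snd r") auto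
    then have "dec_q Q r k = r" by (cases r) (auto simp: dec_q_def dec_p_def)
    then show ?thesis using assms(2) by simp
  qed simp
qed

lemma path_end_in_verts:
  assumes "finite_quiver Q" "is_path Q p"
  shows "path_end Q p \<in> verts Q"
  using assms unfolding finite_quiver_def is_path_def path_end_def
  by (cases "snd p = []") (auto dest: last_in_set)

lemma is_path_trivial_at_end:
  assumes "finite_quiver Q" "is_path Q p"
  shows "is_path Q (path_end Q p, [])"
  using path_end_in_verts[OF assms] by (simp add: is_path_def)

lemma path_elem_in_T_carrier:
  assumes "is_path Q p" "d \<in> Dset D"
  shows "path_elem d p \<in> T_carrier Q D"
  using assms unfolding T_carrier_def pa_carrier_def path_elem_def by auto

lemma is_path_of_T_carrier: "f \<in> T_carrier Q D \<Longrightarrow> f p \<noteq> 0 \<Longrightarrow> is_path Q p"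
  unfolding T_carrier_def pa_carrier_def by blast

lemma T_carrier_in_Dset: "f \<in> T_carrier Q D \<Longrightarrow> f p \<in> Dset D"
  unfolding T_carrier_def pa_carrier_def by blast

lemma path_elem_of_supported:
  assumes "\<forall>r. r \<noteq> p \<longrightarrow> f r = 0"
  shows "f = path_elem (f p) p"
  using assms by (auto simp: path_elem_def)

lemma T_ideal_mul_left:
  assumes "T_ideal Q D bar I" "u \<in> T_carrier Q D" "x \<in> I"
  shows "T_mul Q D bar u x \<in> I"
  using assms unfolding T_ideal_def by blast

lemma T_ideal_mul_right:
  assumes "T_ideal Q D bar I" "u \<in> T_carrier Q D" "x \<in> I"
  shows "T_mul Q D bar x u \<in> I"
  using assms unfolding T_ideal_def by blast

lemma T_ideal_fadd: "T_ideal Q D bar I \<Longrightarrow> x \<in> I \<Longrightarrow> y \<in> I \<Longrightarrow> fadd x y \<in> I"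
  unfolding T_ideal_def by blast

lemma T_ideal_fsub: "T_ideal Q D bar I \<Longrightarrow> x \<in> I \<Longrightarrow> y \<in> I \<Longrightarrow> fsub x y \<in> I"
  using T_ideal_fadd[of Q D bar I x "fneg y"]
  by (simp add: T_ideal_def fsub_def fadd_def fneg_def)

lemma R_of_T_ideal: "T_ideal Q D bar I \<Longrightarrow> R_of Q D I = I"
  unfolding R_of_def T_ideal_def T_carrier_def by blast

lemma T_ideal_contains_supported:
  assumes "finite_quiver Q" "T_ideal Q D bar I" "path_elem qone p \<in> I"
    and "f \<in> T_carrier Q D" "\<forall>r. r \<noteq> p \<longrightarrow> f r = 0"
  shows "f \<in> I"
proof -
  have "path_elem qone p \<in> T_carrier Q D" using assms(2,3) by (auto simp: T_ideal_def)
  then have "is_path Q p" by (rule is_path_of_T_carrier) (simp add: path_elem_def)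
  moreover have "f p \<in> Dset D" using assms(4) by (rule T_carrier_in_Dset)
  ultimately have "path_elem (f p) (path_end Q p, []) \<in> T_carrier Q D"
    by (intro path_elem_in_T_carrier is_path_trivial_at_end[OF assms(1)])
  from T_ideal_mul_left[OF assms(2) this assms(3)] show ?thesis
    unfolding T_mul_trivial_path_left qmul_qone_right
    by (subst path_elem_of_supported[OF assms(5)])
qed

lemma T_ideal_path_elem_qone:
  assumes "finite_quiver Q" "T_ideal Q D bar I"
    and "f \<in> I" "f p \<noteq> 0" "\<forall>r. r \<noteq> p \<longrightarrow> f r = 0"
  shows "path_elem qone p \<in> I"
proof -
  have "f \<in> T_carrier Q D" using assms(2,3) by (auto simp: T_ideal_def)
  then have p: "is_path Q p" and fp: "f p \<in> Dset D"
    using assms(4) by (auto intro: is_path_of_T_carrier T_carrier_in_Dset)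
  obtain d where d: "d \<in> Dset D" "qmul d (f p) = qone"
    using Dset_left_inverse[OF fp assms(4)] .
  then have "path_elem d (path_end Q p, []) \<in> T_carrier Q D"
    by (intro path_elem_in_T_carrier is_path_trivial_at_end[OF assms(1) p])
  from T_ideal_mul_left[OF assms(2) this assms(3)] show ?thesis
    by (subst (asm) path_elem_of_supported[OF assms(5)])
      (simp only: T_mul_trivial_path_left d(2))
qed

lemma TC_mul_IC_left:
  assumes "T_ideal Q D bar I" "a \<in> TC_carrier Q D" "z \<in> IC I"
  shows "TC_mul Q D bar a z \<in> IC I"
  using assms unfolding TC_mul_def IC_def TC_carrier_def
  by (auto intro!: T_ideal_fsub T_ideal_fadd T_ideal_mul_left)

lemma TC_mul_IC_right:
  assumes "T_ideal Q D bar I" "a \<in> TC_carrier Q D" "z \<in> IC I"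
  shows "TC_mul Q D bar z a \<in> IC I"
  using assms unfolding TC_mul_def IC_def TC_carrier_def
  by (auto intro!: T_ideal_fsub T_ideal_fadd T_ideal_mul_right)

lemma ebold_in_TC_carrier:
  assumes "finite_quiver Q"
  shows "ebold Q D \<in> TC_carrier Q D"
proof -
  have "{p. snd p = [] \<and> fst p \<in> verts Q} = (\<lambda>v. (v, [])) ` verts Q" by force
  moreover have "finite (verts Q)" using assms by (simp add: finite_quiver_def)
  ultimately have fin: "finite {p. snd p = [] \<and> fst p \<in> verts Q}" by (metis finite_imageI)
  have "(1, 0) \<in> Dset D" using qone_in_Dset[of D] by (simp add: qone_def)
  then show ?thesis unfolding TC_carrier_def T_carrier_def pa_carrier_def ebold_def
    by (auto simp: is_path_def intro: finite_subset[OF _ fin]) (auto simp: Dset_def)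
qed

lemma ebold_trivial:
  "\<forall>s. fst (ebold Q D) s \<noteq> 0 \<longrightarrow> snd s = []" "\<forall>s. snd (ebold Q D) s \<noteq> 0 \<longrightarrow> snd s = []"
  by (auto simp: ebold_def)

lemma corner_mono: "X \<subseteq> Y \<Longrightarrow> corner Q D bar X \<subseteq> corner Q D bar Y"
  unfolding corner_def by blast

lemma corner_IC_subset:
  assumes "finite_quiver Q" "T_ideal Q D bar I"
  shows "corner Q D bar (IC I) \<subseteq> IC I"
  using TC_mul_IC_left[OF assms(2) ebold_in_TC_carrier[OF assms(1)]]
    TC_mul_IC_right[OF assms(2) ebold_in_TC_carrier[OF assms(1)]]
  unfolding corner_def by blast

text \<open>Multiplying by e only touches trivial paths, so it cannot move the support off p.\<close>
lemma corner_MpC_supported: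
  assumes "z \<in> corner Q D bar (MpC Q D p)" "r \<noteq> p"
  shows "fst z r = 0 \<and> snd z r = 0"
proof -
  obtain z' where z': "z' \<in> MpC Q D p"
    and z: "z = TC_mul Q D bar (ebold Q D) (TC_mul Q D bar z' (ebold Q D))"
    using assms(1) unfolding corner_def by blast
  have "fst z' r = 0" "snd z' r = 0" using z' assms(2) unfolding MpC_def by blast+
  then have "fst (TC_mul Q D bar z' (ebold Q D)) r = 0" "snd (TC_mul Q D bar z' (ebold Q D)) r = 0"
    by (simp_all add: TC_mul_def fsub_def fadd_def T_mul_right_trivial_vanishes ebold_trivial)
  then show ?thesis
    by (simp add: z TC_mul_def fsub_def fadd_def T_mul_left_trivial_vanishes ebold_trivial)
qed

lemma MpC_subset_IC:
  assumes "finite_quiver Q" "T_ideal Q D bar I" "path_elem qone p \<in> I"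
  shows "MpC Q D p \<subseteq> IC I"
proof
  fix z assume "z \<in> MpC Q D p"
  then have "fst z \<in> T_carrier Q D" "snd z \<in> T_carrier Q D"
    "\<forall>r. r \<noteq> p \<longrightarrow> fst z r = 0" "\<forall>r. r \<noteq> p \<longrightarrow> snd z r = 0"
    unfolding MpC_def TC_carrier_def mem_Times_iff by blast+
  then show "z \<in> IC I"
    unfolding IC_def mem_Times_iff by (blast intro: T_ideal_contains_supported[OF assms])
qed

lemma complexification_iso_zero:
  assumes "complexification_iso Q D bar \<Psi>" "(\<lambda>_. 0, \<lambda>_. 0) \<in> corner Q D bar (TC_carrier Q D)"
  shows "\<Psi> (\<lambda>_. 0, \<lambda>_. 0) = (\<lambda>_. 0)"
proof -
  have "TC_add (\<lambda>_. 0, \<lambda>_. 0) (\<lambda>_. 0, \<lambda>_. 0) = (\<lambda>_. 0, \<lambda>_. 0)"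
    by (simp add: TC_add_def fadd_def)
  moreover have "\<Psi> (TC_add (\<lambda>_. 0, \<lambda>_. 0) (\<lambda>_. 0, \<lambda>_. 0)) =
      fadd (\<Psi> (\<lambda>_. 0, \<lambda>_. 0)) (\<Psi> (\<lambda>_. 0, \<lambda>_. 0))"
    using assms unfolding complexification_iso_def by blast
  ultimately have "\<Psi> (\<lambda>_. 0, \<lambda>_. 0) = fadd (\<Psi> (\<lambda>_. 0, \<lambda>_. 0)) (\<Psi> (\<lambda>_. 0, \<lambda>_. 0))"
    by metis
  then show ?thesis by (simp add: fadd_def fun_eq_iff)
qed

lemma path_elem_fiber_in_corner_MpC:
  assumes "complexification_iso Q D bar \<Psi>" "is_path Q p"
    and "q \<in> path_fibers Q (\<lambda>_. D) bar p"
  shows "path_elem (1::complex) q \<in> \<Psi> ` corner Q D bar (MpC Q D p)"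
proof -
  have "is_path (Gamma Q (\<lambda>_. D) bar) q" using assms(3) unfolding path_fibers_def by blast
  moreover have "{r. path_elem (1::complex) q r \<noteq> 0} = {q}" by (auto simp: path_elem_def)
  ultimately have "path_elem (1::complex) q \<in> CG_carrier Q (\<lambda>_. D) bar"
    unfolding CG_carrier_def pa_carrier_def by (simp add: path_elem_def)
  moreover have "\<Psi> ` corner Q D bar (MpC Q D p) =
      {g \<in> CG_carrier Q (\<lambda>_. D) bar. \<forall>r. g r \<noteq> 0 \<longrightarrow> r \<in> path_fibers Q (\<lambda>_. D) bar p}"
    using assms(1,2) unfolding complexification_iso_def by blast
  ultimately show ?thesis using assms(3) by (simp add: path_elem_def)
qed

lemma path_elem_fiber_in_corner_image_iff:
  assumes fq: "finite_quiver Q" and I: "T_ideal Q D bar I"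
    and \<Psi>: "complexification_iso Q D bar \<Psi>"
    and p: "is_path Q p" and q: "q \<in> path_fibers Q (\<lambda>_. D) bar p"
  shows "path_elem (1::complex) q \<in> \<Psi> ` corner Q D bar (IC I) \<longleftrightarrow> path_elem qone p \<in> I"
proof
  assume "path_elem (1::complex) q \<in> \<Psi> ` corner Q D bar (IC I)"
  then obtain z where zI: "z \<in> corner Q D bar (IC I)" and z_val: "\<Psi> z = path_elem 1 q"
    by force
  obtain z' where zM: "z' \<in> corner Q D bar (MpC Q D p)" and z'_val: "\<Psi> z' = path_elem 1 q"
    using path_elem_fiber_in_corner_MpC[OF \<Psi> p q] by force
  have IC_carrier: "IC I \<subseteq> TC_carrier Q D"
    using I by (auto simp: IC_def TC_carrier_def T_ideal_def)
  have MpC_carrier: "MpC Q D p \<subseteq> TC_carrier Q D" by (auto simp: MpC_def)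
  have zC: "z \<in> corner Q D bar (TC_carrier Q D)"
    using zI corner_mono[OF IC_carrier] by blast
  moreover have "z' \<in> corner Q D bar (TC_carrier Q D)"
    using zM corner_mono[OF MpC_carrier] by blast
  moreover have "inj_on \<Psi> (corner Q D bar (TC_carrier Q D))"
    using \<Psi> unfolding complexification_iso_def by (blast dest: bij_betw_imp_inj_on)
  ultimately have "z = z'" using z_val z'_val by (metis inj_onD)
  then have supp: "\<forall>r. r \<noteq> p \<longrightarrow> fst z r = 0 \<and> snd z r = 0"
    using corner_MpC_supported[OF zM] by blast
  have "path_elem (1::complex) q q \<noteq> 0" by (simp add: path_elem_def)
  then have "z \<noteq> (\<lambda>_. 0, \<lambda>_. 0)"
    using complexification_iso_zero[OF \<Psi>] zC z_val by force
  then have "fst z p \<noteq> 0 \<or> snd z p \<noteq> 0"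
    using supp by (metis prod.collapse ext)
  moreover have "fst z \<in> I" "snd z \<in> I"
    using zI corner_IC_subset[OF fq I] by (auto simp: IC_def)
  ultimately show "path_elem qone p \<in> I"
    using supp T_ideal_path_elem_qone[OF fq I] by blast
next
  assume "path_elem qone p \<in> I"
  then have "corner Q D bar (MpC Q D p) \<subseteq> corner Q D bar (IC I)"
    by (intro corner_mono MpC_subset_IC[OF fq I])
  then show "path_elem (1::complex) q \<in> \<Psi> ` corner Q D bar (IC I)"
    using path_elem_fiber_in_corner_MpC[OF \<Psi> p q] by blast
qed

definition arrs_from :: "('v, 'a) quiver \<Rightarrow> 'v \<Rightarrow> 'a set" where
  "arrs_from Q v = {a \<in> arrs Q. src Q a = v}"

definition arrs_into :: "('v, 'a) quiver \<Rightarrow> 'v \<Rightarrow> 'a set" where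
  "arrs_into Q v = {a \<in> arrs Q. tgt Q a = v}"

lemma gentle_altdef:
  "gentle Q one R v \<longleftrightarrow>
     card (arrs_from Q v) \<le> 2 \<and> card (arrs_into Q v) \<le> 2 \<and>
     (\<forall>\<alpha>\<in>arrs_from Q v. \<forall>\<beta>\<in>arrs_into Q v. \<forall>\<gamma>\<in>arrs_into Q v. \<beta> \<noteq> \<gamma> \<longrightarrow>
        (path_elem one (comp2 Q \<alpha> \<beta>) \<in> R) \<noteq> (path_elem one (comp2 Q \<alpha> \<gamma>) \<in> R)) \<and>
     (\<forall>\<alpha>\<in>arrs_from Q v. \<forall>\<gamma>\<in>arrs_from Q v. \<forall>\<beta>\<in>arrs_into Q v. \<alpha> \<noteq> \<gamma> \<longrightarrow>
        (path_elem one (comp2 Q \<alpha> \<beta>) \<in> R) \<noteq> (path_elem one (comp2 Q \<gamma> \<beta>) \<in> R))"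
  unfolding gentle_def arrs_from_def arrs_into_def by blast

lemma gentle_transfer:
  assumes from_eq: "arrs_from Q' w = f ` arrs_from Q v" and f: "inj_on f (arrs_from Q v)"
    and into_eq: "arrs_into Q' w = g ` arrs_into Q v" and g: "inj_on g (arrs_into Q v)"
    and relations: "\<And>\<alpha> \<beta>. \<alpha> \<in> arrs_from Q v \<Longrightarrow> \<beta> \<in> arrs_into Q v \<Longrightarrow>
      path_elem one' (comp2 Q' (f \<alpha>) (g \<beta>)) \<in> R' \<longleftrightarrow> path_elem one (comp2 Q \<alpha> \<beta>) \<in> R"
  shows "gentle Q' one' R' w \<longleftrightarrow> gentle Q one R v"
  unfolding gentle_altdef from_eq into_eq
  by (simp add: card_image f g inj_on_eq_iff[OF f] inj_on_eq_iff[OF g] relations cong: ball_cong)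

lemma is_path_comp2:
  "is_path Q (comp2 Q \<alpha> \<beta>) \<longleftrightarrow>
     src Q \<beta> \<in> verts Q \<and> \<alpha> \<in> arrs Q \<and> \<beta> \<in> arrs Q \<and> tgt Q \<beta> = src Q \<alpha>"
proof -
  have "(\<forall>k. Suc k < length [\<beta>, \<alpha>] \<longrightarrow> tgt Q ([\<beta>, \<alpha>] ! k) = src Q ([\<beta>, \<alpha>] ! Suc k))
      \<longleftrightarrow> tgt Q \<beta> = src Q \<alpha>"
    by (auto simp: less_Suc_eq)
  then show ?thesis unfolding is_path_def comp2_def by auto
qed

lemma Gamma_verts: "x \<in> verts (Gamma Q (\<lambda>_. D) bar) \<longleftrightarrow> fst x \<in> verts Q \<and> (snd x \<longrightarrow> D = DC)"
  by (cases x) (auto simp: Gamma_def)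

lemma Gamma_arrs: "a \<in> arrs (Gamma Q (\<lambda>_. D) bar) \<longleftrightarrow> fst a \<in> arrs Q \<and> (snd a \<longrightarrow> D = DC)"
  by (cases a; cases D) (auto simp: Gamma_def RH_def)

lemma Gamma_src: "src (Gamma Q (\<lambda>_. D) bar) (\<alpha>, b) =
    (if D = DC then (src Q \<alpha>, if bar \<alpha> then \<not> b else b) else (src Q \<alpha>, False))"
  by (simp add: Gamma_def Let_def)

lemma Gamma_tgt: "tgt (Gamma Q (\<lambda>_. D) bar) (\<alpha>, b) =
    (if D = DC then (tgt Q \<alpha>, b) else (tgt Q \<alpha>, False))"
  by (simp add: Gamma_def Let_def)

text \<open>The unique fibre of \<alpha> starting at the vertex w of Gamma; the unique fibre of \<beta>
  ending at w is (\<beta>, snd w).\<close>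
definition lift_from :: "divring \<Rightarrow> ('a \<Rightarrow> bool) \<Rightarrow> 'v \<times> bool \<Rightarrow> 'a \<Rightarrow> 'a \<times> bool" where
  "lift_from D bar w \<alpha> = (\<alpha>, if D = DC \<and> bar \<alpha> then \<not> snd w else snd w)"

lemma arrs_from_Gamma:
  assumes "w \<in> verts (Gamma Q (\<lambda>_. D) bar)"
  shows "arrs_from (Gamma Q (\<lambda>_. D) bar) w = lift_from D bar w ` arrs_from Q (fst w)"
proof -
  have "a \<in> arrs (Gamma Q (\<lambda>_. D) bar) \<and> src (Gamma Q (\<lambda>_. D) bar) a = w \<longleftrightarrow>
      (\<exists>\<alpha>. a = lift_from D bar w \<alpha> \<and> \<alpha> \<in> arrs Q \<and> src Q \<alpha> = fst w)" for a
    using assms by (cases a; cases w) (auto simp: Gamma_verts Gamma_arrs Gamma_src lift_from_def)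
  then show ?thesis unfolding arrs_from_def by blast
qed

lemma arrs_into_Gamma:
  assumes "w \<in> verts (Gamma Q (\<lambda>_. D) bar)"
  shows "arrs_into (Gamma Q (\<lambda>_. D) bar) w = (\<lambda>\<beta>. (\<beta>, snd w)) ` arrs_into Q (fst w)"
proof -
  have "a \<in> arrs (Gamma Q (\<lambda>_. D) bar) \<and> tgt (Gamma Q (\<lambda>_. D) bar) a = w \<longleftrightarrow>
      (\<exists>\<beta>. a = (\<beta>, snd w) \<and> \<beta> \<in> arrs Q \<and> tgt Q \<beta> = fst w)" for a
    using assms by (cases a; cases w) (auto simp: Gamma_verts Gamma_arrs Gamma_tgt)
  then show ?thesis unfolding arrs_into_def by blast
qed

lemma comp2_lifts_in_path_fibers:
  assumes "finite_quiver Q" "w \<in> verts (Gamma Q (\<lambda>_. D) bar)"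
    and "\<alpha> \<in> arrs_from Q (fst w)" "\<beta> \<in> arrs_into Q (fst w)"
  shows "comp2 (Gamma Q (\<lambda>_. D) bar) (lift_from D bar w \<alpha>) (\<beta>, snd w)
           \<in> path_fibers Q (\<lambda>_. D) bar (comp2 Q \<alpha> \<beta>)"
proof -
  let ?G = "Gamma Q (\<lambda>_. D) bar"
  have "lift_from D bar w \<alpha> \<in> arrs_from ?G w" "(\<beta>, snd w) \<in> arrs_into ?G w"
    using assms(3,4) arrs_from_Gamma[OF assms(2)] arrs_into_Gamma[OF assms(2)] by auto
  moreover have "src ?G (\<beta>, snd w) \<in> verts ?G"
    using assms(1,4) by (auto simp: finite_quiver_def arrs_into_def Gamma_src Gamma_verts)
  ultimately have "is_path ?G (comp2 ?G (lift_from D bar w \<alpha>) (\<beta>, snd w))"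
    by (simp add: is_path_comp2 arrs_from_def arrs_into_def)
  then show ?thesis
    by (simp add: path_fibers_def comp2_def lift_from_def Gamma_src)
qed

lemma gentle_at_fiber_iff:
  assumes fq: "finite_quiver Q" and I: "T_ideal Q D bar I"
    and \<Psi>: "complexification_iso Q D bar \<Psi>" and w: "w \<in> verts (Gamma Q (\<lambda>_. D) bar)"
  shows "gentle (Gamma Q (\<lambda>_. D) bar) (1::complex) (\<Psi> ` corner Q D bar (IC I)) w \<longleftrightarrow>
    gentle Q qone I (fst w)"
proof (rule gentle_transfer[OF arrs_from_Gamma[OF w] _ arrs_into_Gamma[OF w]])
  show "inj_on (lift_from D bar w) (arrs_from Q (fst w))"
    by (simp add: inj_on_def lift_from_def)
  show "inj_on (\<lambda>\<beta>. (\<beta>, snd w)) (arrs_into Q (fst w))"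
    by (simp add: inj_on_def)
next
  fix \<alpha> \<beta> assume \<alpha>: "\<alpha> \<in> arrs_from Q (fst w)" and \<beta>: "\<beta> \<in> arrs_into Q (fst w)"
  then have "is_path Q (comp2 Q \<alpha> \<beta>)"
    using fq by (auto simp: is_path_comp2 arrs_from_def arrs_into_def finite_quiver_def)
  from path_elem_fiber_in_corner_image_iff[OF fq I \<Psi> this comp2_lifts_in_path_fibers[OF fq w \<alpha> \<beta>]]
  show "path_elem 1 (comp2 (Gamma Q (\<lambda>_. D) bar) (lift_from D bar w \<alpha>) (\<beta>, snd w))
      \<in> \<Psi> ` corner Q D bar (IC I) \<longleftrightarrow> path_elem qone (comp2 Q \<alpha> \<beta>) \<in> I" .
qed

theorem lemma5p1:
  fixes Q :: "('v, 'a) quiver" and D :: divring and bar :: "'a \<Rightarrow> bool"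
    and I :: "(('v, 'a) path \<Rightarrow> quat) set"
    and \<Psi> :: "('v, 'a) TC \<Rightarrow> ('v \<times> bool, 'a \<times> bool) path \<Rightarrow> complex"
    and v :: 'v
  assumes "finite_quiver Q"
    and "admissible Q D bar I"
    and "complexification_iso Q D bar \<Psi>"
    and "v \<in> verts Q"
  shows "gentle Q qone (R_of Q D I) v \<longleftrightarrow>
         (\<forall>w\<in>vertex_fibers Q (\<lambda>_. D) bar v.
            gentle (Gamma Q (\<lambda>_. D) bar) (1::complex) (\<Psi> ` corner Q D bar (IC I)) w)"
proof -
  have I: "T_ideal Q D bar I" using assms(2) by (simp add: admissible_def)
  have "(v, False) \<in> vertex_fibers Q (\<lambda>_. D) bar v"
    using assms(4) by (simp add: vertex_fibers_def Gamma_verts)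
  moreover have "gentle (Gamma Q (\<lambda>_. D) bar) 1 (\<Psi> ` corner Q D bar (IC I)) w \<longleftrightarrow> gentle Q qone I v"
    if "w \<in> vertex_fibers Q (\<lambda>_. D) bar v" for w
    using gentle_at_fiber_iff[OF assms(1) I assms(3)] that by (auto simp: vertex_fibers_def)
  ultimately show ?thesis by (auto simp: R_of_T_ideal[OF I])
qed

end
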